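(* Consider a run of Algorithm 1 (described in the context) against an adversary making at most $C$ corruptions. The total absolute loss $\sum |f(x_t)-q_t|$ over all rounds $t$ lying in corrupted intervals is at most $L\cdot O(C\log T)$, with an absolute constant.
   Context: Problem. Fix $L>0$ and $T\ge 2$. An adversary fixes an unknown $L$-Lipschitz $f:[0,1]\to[0,L]$. In each round $t=1,\dots,T$: the adversary chooses $x_t\in[0,1]$; the learner observes $x_t$ and guesses $q_t$; the adversary observes $q_t$ and sends $\sigma_t\in\{0,1\}$, equal to $\sigma(q_t-f(x_t))$ in uncorrupted rounds and $1-\sigma(q_t-f(x_t))$ in corrupted rounds, where $\sigma(u)=1$ if $u>0$ and $0$ if $u\le 0$; the adversary chooses adaptively which rounds to corrupt, at most $C$ in total ($C$ unknown to the learner). The absolute loss of round $t$ is $|f(x_t)-q_t|$. $\mathtt{len}(I)$ is the length of an interval $I$. $\mathtt{MidpointQuery}(I,Y)$, $Y=[a,b]$: guess $q=(a+b)/2$; if $\sigma_t=1$ return $Y\cap[0,q+L\,\mathtt{len}(I)]$, if $\sigma_t=0$ return $Y\cap[q-L\,\mathtt{len}(I),L]$. Algorithm 1. Maintain a partition of $[0,1]$ into intervals; each $I_j$ carries a checking interval $S_j$, range $Y_j$, and a "dubious" flag (initially unset). Initially: $8$ intervals of length $1/8$ (the root intervals), each with $S_j=Y_j=[0,L]$. In round $t$, with $I_j$ the partition interval containing $x_t$: (i) if some endpoint of $S_j$ has not been guessed in a round whose context lay in $I_j$, guess such an endpoint; if the guess was $\min(S_j)$ with $\sigma_t=1$ or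 $\max(S_j)$ with $\sigma_t=0$, mark $I_j$ dubious; once both endpoints have been queried, set $Y_j=[0,L]$ if dubious and otherwise $Y_j=[\min(S_j)-L\,\mathtt{len}(I_j),\max(S_j)+L\,\mathtt{len}(I_j)]\cap[0,L]$. (ii) Otherwise set $Y_j:=\mathtt{MidpointQuery}(I_j,Y_j)$; if then $\mathtt{len}(Y_j)<\max(4L\,\mathtt{len}(I_j),4L/T)$, bisect $I_j$ into its two halves (its children), which replace it, each with checking interval equal to the current $Y_j$ (endpoints unqueried, not dubious). Interval types. Say a round $t$ lies in $I_j$ if $I_j$ is the partition interval containing $x_t$ at round $t$. An interval $I_j$ is corrupted if some round lying in $I_j$ has a corrupted signal. *)

theory Defs
  imports "HOL-Analysis.Analysis"
begin

text \<open>A node of the partition: the interval [lo,hi], its checking interval S = [smin,smax],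
  its range Y = [ymin,ymax], flags telling whether min S / max S have been guessed in a
  round lying in this interval, and the dubious flag.\<close>
record node =
  lo :: real
  hi :: real
  smin :: real
  smax :: real
  ymin :: real
  ymax :: real
  qmin :: bool
  qmax :: bool
  dub :: bool

type_synonym hist = "(real \<times> real \<times> bool) list"  \<comment> \<open>(x_s, q_s, sigma_s) of past rounds\<close>

definition fresh_node :: "real \<Rightarrow> real \<Rightarrow> real \<Rightarrow> real \<Rightarrow> node" where
  "fresh_node a b y1 y2 = \<lparr>lo = a, hi = b, smin = y1, smax = y2, ymin = y1, ymax = y2,
      qmin = False, qmax = False, dub = False\<rparr>"

definition init_partition :: "real \<Rightarrow> node list" where
  "init_partition L = map (\<lambda>k. fresh_node (real k / 8) (real (Suc k) / 8) 0 L) [0..<8]"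

definition contains :: "node \<Rightarrow> real \<Rightarrow> bool" where
  "contains n x \<longleftrightarrow> lo n \<le> x \<and> (x < hi n \<or> (hi n = 1 \<and> x = 1))"

definition find_node :: "node list \<Rightarrow> real \<Rightarrow> nat" where
  "find_node P x = (LEAST i. i < length P \<and> contains (P ! i) x)"

text \<open>The learner's guess. pk resolves the choice in step (i) when both endpoints
  of S are still unguessed (True: guess min S, False: guess max S).\<close>
definition guess :: "node \<Rightarrow> bool \<Rightarrow> real" where
  "guess n pk =
     (if \<not> qmin n \<and> \<not> qmax n then (if pk then smin n else smax n)
      else if \<not> qmin n then smin n
      else if \<not> qmax n then smax n
      else (ymin n + ymax n) / 2)"

definition update :: "real \<Rightarrow> nat \<Rightarrow> node \<Rightarrow> real \<Rightarrow> bool \<Rightarrow> node list" where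
  "update L T n q sg =
     (let len = hi n - lo n in
      if \<not> (qmin n \<and> qmax n) then
        (let n1 = n\<lparr>qmin := (qmin n \<or> q = smin n), qmax := (qmax n \<or> q = smax n),
                    dub := (dub n \<or> (q = smin n \<and> sg) \<or> (q = smax n \<and> \<not> sg))\<rparr> in
         if qmin n1 \<and> qmax n1 then
           (if dub n1 then [n1\<lparr>ymin := 0, ymax := L\<rparr>]
            else [n1\<lparr>ymin := max (smin n1 - L * len) 0, ymax := min (smax n1 + L * len) L\<rparr>])
         else [n1])
      else
        (let y1' = (if sg then max (ymin n) 0 else max (ymin n) (q - L * len));
             y2' = (if sg then min (ymax n) (q + L * len) else min (ymax n) L) in
         if y2' - y1' < max (4 * L * len) (4 * L / real T) then
           [fresh_node (lo n) ((lo n + hi n) / 2) y1' y2',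
            fresh_node ((lo n + hi n) / 2) (hi n) y1' y2']
         else [n\<lparr>ymin := y1', ymax := y2'\<rparr>]))"

definition sgn_fb :: "real \<Rightarrow> bool" where
  "sgn_fb u \<longleftrightarrow> u > 0"

text \<open>Adversary: X chooses the context from the history, Cor
  decides (after seeing the context and the guess) whether to corrupt the signal.
  run ... t is the state (partition, history) before round t+1.\<close>
fun run :: "real \<Rightarrow> nat \<Rightarrow> (real \<Rightarrow> real) \<Rightarrow> (hist \<Rightarrow> real) \<Rightarrow> (hist \<Rightarrow> real \<Rightarrow> real \<Rightarrow> bool)
              \<Rightarrow> (hist \<Rightarrow> bool) \<Rightarrow> nat \<Rightarrow> node list \<times> hist" where
  "run L T f X Cor pick 0 = (init_partition L, [])"
| "run L T f X Cor pick (Suc t) =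
     (let (P, h) = run L T f X Cor pick t;
          x = X h; i = find_node P x; n = P ! i; q = guess n (pick h);
          sg = (if Cor h x q then \<not> sgn_fb (q - f x) else sgn_fb (q - f x))
      in (take i P @ update L T n q sg @ drop (Suc i) P, h @ [(x, q, sg)]))"

text \<open>Quantities of round t+1 (t = 0,...,T-1).\<close>
definition ctx :: "real \<Rightarrow> nat \<Rightarrow> (real \<Rightarrow> real) \<Rightarrow> (hist \<Rightarrow> real) \<Rightarrow> (hist \<Rightarrow> real \<Rightarrow> real \<Rightarrow> bool)
              \<Rightarrow> (hist \<Rightarrow> bool) \<Rightarrow> nat \<Rightarrow> real" where
  "ctx L T f X Cor pick t = X (snd (run L T f X Cor pick t))"

definition cur_node :: "real \<Rightarrow> nat \<Rightarrow> (real \<Rightarrow> real) \<Rightarrow> (hist \<Rightarrow> real) \<Rightarrow> (hist \<Rightarrow> real \<Rightarrow> real \<Rightarrow> bool)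
              \<Rightarrow> (hist \<Rightarrow> bool) \<Rightarrow> nat \<Rightarrow> node" where
  "cur_node L T f X Cor pick t =
     (let P = fst (run L T f X Cor pick t) in P ! find_node P (ctx L T f X Cor pick t))"

definition round_interval :: "real \<Rightarrow> nat \<Rightarrow> (real \<Rightarrow> real) \<Rightarrow> (hist \<Rightarrow> real) \<Rightarrow> (hist \<Rightarrow> real \<Rightarrow> real \<Rightarrow> bool)
              \<Rightarrow> (hist \<Rightarrow> bool) \<Rightarrow> nat \<Rightarrow> real \<times> real" where
  "round_interval L T f X Cor pick t =
     (let n = cur_node L T f X Cor pick t in (lo n, hi n))"

definition round_guess :: "real \<Rightarrow> nat \<Rightarrow> (real \<Rightarrow> real) \<Rightarrow> (hist \<Rightarrow> real) \<Rightarrow> (hist \<Rightarrow> real \<Rightarrow> real \<Rightarrow> bool)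
              \<Rightarrow> (hist \<Rightarrow> bool) \<Rightarrow> nat \<Rightarrow> real" where
  "round_guess L T f X Cor pick t =
     guess (cur_node L T f X Cor pick t) (pick (snd (run L T f X Cor pick t)))"

definition round_corrupted :: "real \<Rightarrow> nat \<Rightarrow> (real \<Rightarrow> real) \<Rightarrow> (hist \<Rightarrow> real) \<Rightarrow> (hist \<Rightarrow> real \<Rightarrow> real \<Rightarrow> bool)
              \<Rightarrow> (hist \<Rightarrow> bool) \<Rightarrow> nat \<Rightarrow> bool" where
  "round_corrupted L T f X Cor pick t \<longleftrightarrow>
     Cor (snd (run L T f X Cor pick t)) (ctx L T f X Cor pick t) (round_guess L T f X Cor pick t)"

definition in_corrupted_interval :: "real \<Rightarrow> nat \<Rightarrow> (real \<Rightarrow> real) \<Rightarrow> (hist \<Rightarrow> real) \<Rightarrow> (hist \<Rightarrow> real \<Rightarrow> real \<Rightarrow> bool)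
              \<Rightarrow> (hist \<Rightarrow> bool) \<Rightarrow> nat \<Rightarrow> bool" where
  "in_corrupted_interval L T f X Cor pick t \<longleftrightarrow>
     (\<exists>s<T. round_interval L T f X Cor pick s = round_interval L T f X Cor pick t
            \<and> round_corrupted L T f X Cor pick s)"

end

theory Submission
  imports Defs
begin

text \<open>Every round costs at most L, since both f(x) and the guess lie in [0,L], and the
  rounds in question lie in at most C distinct intervals; so it suffices that every interval
  ever present in the partition receives at most 3 + log2 T rounds.  Two rounds query the
  endpoints of S; afterwards each midpoint query halves Y up to an additive L len(I), while
  Y stays above max(4 L len(I), 4L/T) until the interval is bisected, which forces
  2^k < T after k midpoint queries.\<close>

fun tiles :: "real \<Rightarrow> real \<Rightarrow> node list \<Rightarrow> bool" where
  "tiles a b [] \<longleftrightarrow> a = b"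
| "tiles a b (n # ns) \<longleftrightarrow> lo n = a \<and> lo n < hi n \<and> tiles (hi n) b ns"

lemma tiles_append: "tiles a b (xs @ ys) \<longleftrightarrow> (\<exists>c. tiles a c xs \<and> tiles c b ys)"
  by (induction xs arbitrary: a) auto

lemma tiles_le: "tiles a b P \<Longrightarrow> a \<le> b"
  by (induction P arbitrary: a) fastforce+

lemma tiles_member_bounds: "tiles a b P \<Longrightarrow> n \<in> set P \<Longrightarrow> a \<le> lo n \<and> lo n < hi n \<and> hi n \<le> b"
  by (induction P arbitrary: a) (fastforce dest: tiles_le)+

lemma tiles_cover: "tiles a b P \<Longrightarrow> a \<le> x \<Longrightarrow> x < b \<Longrightarrow> \<exists>n\<in>set P. lo n \<le> x \<and> x < hi n"
  by (induction P arbitrary: a) (auto, metis not_less)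

lemma tiles_last: "tiles a b P \<Longrightarrow> P \<noteq> [] \<Longrightarrow> hi (last P) = b"
  by (induction P arbitrary: a) auto

lemma find_node_tiles:
  assumes "tiles 0 1 P" "0 \<le> x" "x \<le> 1"
  shows "find_node P x < length P"
proof -
  have "\<exists>n\<in>set P. contains n x"
  proof (cases "x < 1")
    case True
    then show ?thesis using tiles_cover[OF assms(1,2)] unfolding contains_def by blast
  next
    case False
    have "P \<noteq> []" using assms(1) by (cases P) auto
    then have "last P \<in> set P" "hi (last P) = 1" using tiles_last[OF assms(1)] by auto
    moreover have "lo (last P) < hi (last P)" using tiles_member_bounds[OF assms(1)] calculation(1) by blast
    ultimately show ?thesis using False assms(3) unfolding contains_def by (intro bexI[of _ "last P"]) auto
  qed
  then have "\<exists>i. i < length P \<and> contains (P ! i) x" by (metis in_set_conv_nth)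
  then show ?thesis unfolding find_node_def by (rule LeastI2_ex) simp
qed

lemma tiles_around:
  assumes "tiles a b P" "i < length P"
  shows "tiles a (lo (P ! i)) (take i P) \<and> tiles (hi (P ! i)) b (drop (Suc i) P)"
proof -
  have "P = take i P @ [P ! i] @ drop (Suc i) P" using assms(2) by (simp add: id_take_nth_drop)
  then obtain c d where "tiles a c (take i P)" "tiles c d [P ! i]" "tiles d b (drop (Suc i) P)"
    using assms(1) tiles_append by metis
  then show ?thesis by simp
qed

lemma tiles_replace:
  assumes "tiles a b P" "i < length P" "tiles (lo (P ! i)) (hi (P ! i)) ns"
  shows "tiles a b (take i P @ ns @ drop (Suc i) P)"
  using tiles_around[OF assms(1,2)] assms(3) by (auto simp: tiles_append)

lemma tiles_disjoint_others:
  assumes "tiles a b P" "i < length P" "n \<in> set (take i P) \<union> set (drop (Suc i) P)"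
  shows "hi n \<le> lo (P ! i) \<or> hi (P ! i) \<le> lo n"
  using tiles_around[OF assms(1,2)] assms(3) tiles_member_bounds by blast

definition values_in_range :: "real \<Rightarrow> node \<Rightarrow> bool" where
  "values_in_range L n \<longleftrightarrow> smin n \<in> {0..L} \<and> smax n \<in> {0..L} \<and> ymin n \<in> {0..L} \<and> ymax n \<in> {0..L}"

text \<open>c is the number of rounds spent in n.  Once both endpoints of S are guessed, every
  further round is a midpoint query halving Y up to an additive L len(I), and k such queries
  that did not bisect n leave Y above the bisection threshold.\<close>
definition visit_invariant :: "real \<Rightarrow> nat \<Rightarrow> node \<Rightarrow> nat \<Rightarrow> bool" where
  "visit_invariant L T n c \<longleftrightarrow>
     (\<not> qmin n \<and> \<not> qmax n \<longrightarrow> c = 0) \<and> (\<not> (qmin n \<and> qmax n) \<longrightarrow> c \<le> 1) \<and>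
     (qmin n \<and> qmax n \<longrightarrow> (\<exists>k. c \<le> 2 + k \<and> ymax n - ymin n \<le> L / 2 ^ k + 2 * L * (hi n - lo n) \<and>
        (k > 0 \<longrightarrow> max (4 * L * (hi n - lo n)) (4 * L / real T) \<le> ymax n - ymin n)))"

abbreviation endpoints :: "node \<Rightarrow> real \<times> real" where
  "endpoints n \<equiv> (lo n, hi n)"

lemma guess_in_range: "values_in_range L n \<Longrightarrow> guess n pk \<in> {0..L}"
  unfolding values_in_range_def guess_def by auto

lemma halvings_below_threshold:
  fixes L l d :: real
  assumes "L > 0" "T > 0" "l > 0" "d \<le> L / 2 ^ k + 2 * L * l" "max (4 * L * l) (4 * L / real T) \<le> d"
  shows "2 ^ k < real T"
proof (rule ccontr)
  assume "\<not> 2 ^ k < real T"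
  \<comment> \<open>then d \<le> L/T + 2 L l \<le> d/4 + d/2, although d > 0\<close>
  then have "L / 2 ^ k \<le> L / real T" using assms(1,2) by (intro divide_left_mono) auto
  moreover have "0 < L * l" using assms(1,3) by simp
  moreover have "4 * L / real T = 4 * (L / real T)" by simp
  ultimately show False using assms(4,5) by auto
qed

lemma visit_invariant_le_log:
  assumes "L > 0" "T \<ge> 2" "lo n < hi n" "visit_invariant L T n c"
  shows "real c \<le> 2 + log 2 (real T)"
proof -
  have log_ge_1: "1 \<le> log 2 (real T)" using assms(2) by (simp add: le_log_iff)
  show ?thesis
  proof (cases "qmin n \<and> qmax n")
    case False
    then show ?thesis using assms(4) log_ge_1 unfolding visit_invariant_def by auto
  next
    case True
    then obtain k where k: "c \<le> 2 + k" "ymax n - ymin n \<le> L / 2 ^ k + 2 * L * (hi n - lo n)"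
      "k > 0 \<longrightarrow> max (4 * L * (hi n - lo n)) (4 * L / real T) \<le> ymax n - ymin n"
      using assms(4) unfolding visit_invariant_def by blast
    have "real k \<le> log 2 (real T)"
    proof (cases "k = 0")
      case False
      then have "2 ^ k < real T" using halvings_below_threshold[OF assms(1) _ _ k(2)] k(3) assms(2,3) by simp
      then show ?thesis using less_log_of_power[of 2 k "real T"] by simp
    qed (use log_ge_1 in simp)
    then show ?thesis using k(1) by linarith
  qed
qed

lemma update_endpoint_step:
  assumes "\<not> (qmin m \<and> qmax m)" "values_in_range L m" "visit_invariant L T m c" "lo m < hi m" "L > 0"
  shows "\<exists>n'. update L T m (guess m pk) sg = [n'] \<and> endpoints n' = endpoints m \<and>
           values_in_range L n' \<and> visit_invariant L T n' (Suc c)"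
proof -
  define q where "q = guess m pk"
  define n1 where "n1 = m\<lparr>qmin := (qmin m \<or> q = smin m), qmax := (qmax m \<or> q = smax m),
                    dub := (dub m \<or> (q = smin m \<and> sg) \<or> (q = smax m \<and> \<not> sg))\<rparr>"
  define len where "len = hi m - lo m"
  define n' where "n' = (if qmin n1 \<and> qmax n1 then
           (if dub n1 then n1\<lparr>ymin := 0, ymax := L\<rparr>
            else n1\<lparr>ymin := max (smin n1 - L * len) 0, ymax := min (smax n1 + L * len) L\<rparr>)
         else n1)"
  have update_eq: "update L T m q sg = [n']"
    using assms(1) unfolding update_def n'_def n1_def len_def Let_def by simp
  have same_endpoints: "lo n' = lo m" "hi n' = hi m" unfolding n'_def n1_def by auto
  have queried: "qmin n' = (qmin m \<or> q = smin m)" "qmax n' = (qmax m \<or> q = smax m)"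
    unfolding n'_def n1_def by auto
  have "0 \<le> L * len" using assms(4,5) unfolding len_def by simp
  then have range': "values_in_range L n'"
    using assms(2) unfolding values_in_range_def n'_def n1_def by auto
  have progress: "qmin n' \<or> qmax n'" "qmin m \<or> qmax m \<Longrightarrow> qmin n' \<and> qmax n'"
    using assms(1) unfolding queried q_def guess_def by auto
  have "c \<le> 1" using assms(1,3) unfolding visit_invariant_def by auto
  have "visit_invariant L T n' (Suc c)"
  proof (cases "qmin n' \<and> qmax n'")
    case True
    have "0 \<le> 2 * L * (hi m - lo m)" using assms(4,5) by simp
    then have "ymax n' - ymin n' \<le> L / 2 ^ 0 + 2 * L * (hi n' - lo n')"
      using range' same_endpoints unfolding values_in_range_def by simp
    then show ?thesis using True \<open>c \<le> 1\<close> unfolding visit_invariant_def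
      by (intro conjI impI; (simp; fail)?) (rule exI[of _ 0]; simp)
  next
    case False
    then have "c = 0" using progress(2) assms(3) unfolding visit_invariant_def by auto
    then show ?thesis using False progress(1) unfolding visit_invariant_def by auto
  qed
  then show ?thesis using update_eq same_endpoints range' unfolding q_def by auto
qed

lemma update_midpoint_step:
  assumes "qmin m" "qmax m" "values_in_range L m" "visit_invariant L T m c" "lo m < hi m" "L > 0"
  shows "(\<exists>n'. update L T m (guess m pk) sg = [n'] \<and> endpoints n' = endpoints m \<and>
            values_in_range L n' \<and> visit_invariant L T n' (Suc c))
    \<or> (\<exists>y1 y2. y1 \<in> {0..L} \<and> y2 \<in> {0..L} \<and> update L T m (guess m pk) sg =
         [fresh_node (lo m) ((lo m + hi m) / 2) y1 y2, fresh_node ((lo m + hi m) / 2) (hi m) y1 y2])"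
proof -
  define len where "len = hi m - lo m"
  define q where "q = (ymin m + ymax m) / 2"
  define y1 where "y1 = (if sg then max (ymin m) 0 else max (ymin m) (q - L * len))"
  define y2 where "y2 = (if sg then min (ymax m) (q + L * len) else min (ymax m) L)"
  have update_eq: "update L T m (guess m pk) sg =
      (if y2 - y1 < max (4 * L * len) (4 * L / real T) then
         [fresh_node (lo m) ((lo m + hi m) / 2) y1 y2, fresh_node ((lo m + hi m) / 2) (hi m) y1 y2]
       else [m\<lparr>ymin := y1, ymax := y2\<rparr>])"
    using assms(1,2) unfolding update_def guess_def Let_def y1_def y2_def len_def q_def by simp
  have "0 < L * len" using assms(5,6) unfolding len_def by simp
  then have y_range: "y1 \<in> {0..L}" "y2 \<in> {0..L}"
    using assms(3) unfolding values_in_range_def y1_def y2_def q_def by (auto simp: field_simps)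
  have "y2 \<le> (if sg then q + L * len else ymax m)" "(if sg then ymin m else q - L * len) \<le> y1"
    unfolding y1_def y2_def by auto
  then have halved: "y2 - y1 \<le> (ymax m - ymin m) / 2 + L * len"
    unfolding q_def by (cases sg) (auto simp: field_simps)
  obtain k where k: "c \<le> 2 + k" "ymax m - ymin m \<le> L / 2 ^ k + 2 * L * (hi m - lo m)"
    using assms(1,2,4) unfolding visit_invariant_def by blast
  show ?thesis
  proof (cases "y2 - y1 < max (4 * L * len) (4 * L / real T)")
    case True
    then show ?thesis using update_eq y_range by auto
  next
    case False
    define n' where "n' = m\<lparr>ymin := y1, ymax := y2\<rparr>"
    define A where "A = L / 2 ^ k"
    have "y2 - y1 \<le> A / 2 + 2 * L * (hi m - lo m)"
      using halved k(2) unfolding len_def A_def[symmetric] by (simp add: field_simps)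
    then have "y2 - y1 \<le> L / 2 ^ Suc k + 2 * L * (hi m - lo m)" unfolding A_def by simp
    then have "visit_invariant L T n' (Suc c)" using False k(1) assms(1,2) unfolding visit_invariant_def n'_def len_def
      by (intro conjI impI; (simp; fail)?) (rule exI[of _ "Suc k"]; simp add: not_less)
    moreover have "values_in_range L n'" using assms(3) y_range unfolding values_in_range_def n'_def by simp
    ultimately show ?thesis using False update_eq unfolding n'_def by auto
  qed
qed

lemma update_step:
  fixes pk sg :: bool
  assumes "values_in_range L m" "visit_invariant L T m c" "lo m < hi m" "L > 0" "T \<ge> 2"
  defines "ns \<equiv> update L T m (guess m pk) sg"
  shows "tiles (lo m) (hi m) ns"
    and "\<forall>n\<in>set ns. values_in_range L n \<and> visit_invariant L T n (if endpoints n = endpoints m then Suc c else 0)"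
    and "real (Suc c) \<le> 3 + log 2 (real T)"
proof -
  have "real c \<le> 2 + log 2 (real T)" using visit_invariant_le_log[OF assms(4,5,3,2)] .
  then show "real (Suc c) \<le> 3 + log 2 (real T)" by simp
  consider (same) n' where "ns = [n']" "endpoints n' = endpoints m" "values_in_range L n'"
      "visit_invariant L T n' (Suc c)"
    | (bisected) y1 y2 where "y1 \<in> {0..L}" "y2 \<in> {0..L}"
      "ns = [fresh_node (lo m) ((lo m + hi m) / 2) y1 y2, fresh_node ((lo m + hi m) / 2) (hi m) y1 y2]"
    unfolding ns_def using update_endpoint_step[OF _ assms(1-4)] update_midpoint_step[OF _ _ assms(1-4)] by blast
  then have "tiles (lo m) (hi m) ns \<and>
      (\<forall>n\<in>set ns. values_in_range L n \<and> visit_invariant L T n (if endpoints n = endpoints m then Suc c else 0))"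
  proof cases
    case same
    then show ?thesis using assms(3) by auto
  next
    case bisected
    then show ?thesis using assms(3) by (auto simp: fresh_node_def values_in_range_def visit_invariant_def)
  qed
  then show "tiles (lo m) (hi m) ns"
    and "\<forall>n\<in>set ns. values_in_range L n \<and> visit_invariant L T n (if endpoints n = endpoints m then Suc c else 0)"
    by blast+
qed

text \<open>visits k is the number of past rounds that lay in the interval with endpoints k.  The
  third clause says that a visited interval is never strictly inside a current one, so both
  children of a bisection start unvisited.\<close>
definition partition_invariant :: "real \<Rightarrow> nat \<Rightarrow> node list \<Rightarrow> (real \<times> real \<Rightarrow> nat) \<Rightarrow> bool" where
  "partition_invariant L T P visits \<longleftrightarrow> tiles 0 1 P \<and>
     (\<forall>n\<in>set P. values_in_range L n \<and> visit_invariant L T n (visits (endpoints n))) \<and>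
     (\<forall>k. \<forall>n\<in>set P. 0 < visits k \<longrightarrow> lo n \<le> fst k \<longrightarrow> snd k \<le> hi n \<longrightarrow> endpoints n = k) \<and>
     (\<forall>k. real (visits k) \<le> 3 + log 2 (real T))"

lemma partition_invariant_init:
  assumes "L > 0" "T \<ge> 2"
  shows "partition_invariant L T (init_partition L) (\<lambda>_. 0)"
  using assms by (auto simp: partition_invariant_def init_partition_def fresh_node_def upt_rec
      values_in_range_def visit_invariant_def)

lemma partition_invariant_step:
  fixes pk sg :: bool
  assumes inv: "partition_invariant L T P visits" and "i < length P" "L > 0" "T \<ge> 2"
  defines "m \<equiv> P ! i"
  defines "ns \<equiv> update L T m (guess m pk) sg"
  shows "partition_invariant L T (take i P @ ns @ drop (Suc i) P)
           (visits(endpoints m := Suc (visits (endpoints m))))"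
    (is "partition_invariant L T ?P' ?visits'")
proof -
  define others where "others = set (take i P) \<union> set (drop (Suc i) P)"
  have tiles_P: "tiles 0 1 P" and m_in: "m \<in> set P" and others_in: "others \<subseteq> set P"
    using inv \<open>i < length P\<close> unfolding partition_invariant_def m_def others_def
    by (auto dest: in_set_takeD in_set_dropD)
  have set_P': "set ?P' = others \<union> set ns" unfolding others_def by auto
  have m_bounds: "lo m < hi m" using tiles_member_bounds[OF tiles_P m_in] by simp
  have m_inv: "values_in_range L m" "visit_invariant L T m (visits (endpoints m))"
    using inv m_in unfolding partition_invariant_def by auto
  have ns_tiles: "tiles (lo m) (hi m) ns"
    and ns_nodes: "\<forall>n\<in>set ns. values_in_range L n \<and>
      visit_invariant L T n (if endpoints n = endpoints m then Suc (visits (endpoints m)) else 0)"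
    and visits_bound: "real (Suc (visits (endpoints m))) \<le> 3 + log 2 (real T)"
    unfolding ns_def using update_step[OF m_inv m_bounds \<open>L > 0\<close> \<open>T \<ge> 2\<close>] by blast+
  have others_apart: "hi n \<le> lo m \<or> hi m \<le> lo n" "lo n < hi n" if "n \<in> others" for n
    using tiles_disjoint_others[OF tiles_P \<open>i < length P\<close>] tiles_member_bounds[OF tiles_P] that others_in
    unfolding m_def others_def by auto
  have ns_inside: "lo m \<le> lo n \<and> hi n \<le> hi m" if "n \<in> set ns" for n
    using tiles_member_bounds[OF ns_tiles that] by simp
  have visits_old: "0 < visits k \<Longrightarrow> n \<in> set P \<Longrightarrow> lo n \<le> fst k \<Longrightarrow> snd k \<le> hi n \<Longrightarrow> endpoints n = k"
    for k n using inv unfolding partition_invariant_def by blast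
  have unvisited: "visits (endpoints n) = 0" if "n \<in> set ns" "endpoints n \<noteq> endpoints m" for n
    using visits_old[OF _ m_in, of "endpoints n"] ns_inside[OF that(1)] that(2) by fastforce
  have "tiles 0 1 ?P'"
    using tiles_replace[OF tiles_P \<open>i < length P\<close>] ns_tiles unfolding m_def by simp
  moreover have "values_in_range L n \<and> visit_invariant L T n (?visits' (endpoints n))" if "n \<in> set ?P'" for n
  proof (cases "n \<in> others")
    case True
    then have "endpoints n \<noteq> endpoints m" using others_apart[OF True] m_bounds by auto
    then show ?thesis using inv True others_in unfolding partition_invariant_def by auto
  next
    case False
    then have "n \<in> set ns" using that set_P' by blast
    then show ?thesis using ns_nodes unvisited[of n] by (cases "endpoints n = endpoints m") auto
  qed
  moreover have "endpoints n = k"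
    if "0 < ?visits' k" "n \<in> set ?P'" "lo n \<le> fst k" "snd k \<le> hi n" for k n
  proof (cases "n \<in> others")
    case True
    then have "k \<noteq> endpoints m" using others_apart[OF True] m_bounds that(3,4) by auto
    then show ?thesis using visits_old[of k n] that True others_in by auto
  next
    case False
    then have "n \<in> set ns" using that(2) set_P' by blast
    then have k_in_m: "lo m \<le> fst k" "snd k \<le> hi m" using ns_inside that(3,4) by force+
    show ?thesis
    proof (cases "k = endpoints m")
      case True
      then show ?thesis using ns_inside[OF \<open>n \<in> set ns\<close>] that(3,4) by force
    next
      case False
      then show ?thesis using visits_old[OF _ m_in k_in_m] that(1) by simp
    qed
  qed
  moreover have "real (?visits' k) \<le> 3 + log 2 (real T)" for k
  proof -
    have "real (visits k) \<le> 3 + log 2 (real T)" using inv unfolding partition_invariant_def by blast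
    then show ?thesis using visits_bound by simp
  qed
  ultimately show ?thesis unfolding partition_invariant_def by blast
qed

lemma sum_over_marked_classes_le:
  fixes w :: "'a \<Rightarrow> real" and cls :: "'a \<Rightarrow> 'b"
  assumes "finite A" "M \<subseteq> A" "card M \<le> C" "\<And>t. t \<in> A \<Longrightarrow> w t \<le> B" "0 \<le> B"
    and class_size: "\<And>k. real (card {t \<in> A. cls t = k}) \<le> N"
  shows "(\<Sum>t | t \<in> A \<and> (\<exists>s\<in>M. cls s = cls t). w t) \<le> B * (real C * N)"
proof -
  define S where "S = {t. t \<in> A \<and> (\<exists>s\<in>M. cls s = cls t)}"
  have "finite M" using assms(2,1) by (rule finite_subset)
  have "0 \<le> real (card {t \<in> A. cls t = undefined})" by simp
  also have "\<dots> \<le> N" by (rule class_size)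
  finally have "0 \<le> N" .
  have S_classes: "S = (\<Union>k\<in>cls ` M. {t \<in> A. cls t = k})" unfolding S_def by fastforce
  have "card S \<le> (\<Sum>k\<in>cls ` M. card {t \<in> A. cls t = k})"
    unfolding S_classes using \<open>finite M\<close> by (intro card_UN_le finite_imageI)
  then have "real (card S) \<le> (\<Sum>k\<in>cls ` M. real (card {t \<in> A. cls t = k}))"
    by (simp only: of_nat_le_iff of_nat_sum[symmetric])
  also have "\<dots> \<le> real (card (cls ` M)) * N"
    using sum_bounded_above[of "cls ` M" _ N] class_size by simp
  also have "\<dots> \<le> real C * N"
    using card_image_le[OF \<open>finite M\<close>, of cls] assms(3) \<open>0 \<le> N\<close> by (intro mult_right_mono) auto
  finally have card_S: "real (card S) \<le> real C * N" .
  have "sum w S \<le> real (card S) * B"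
    using sum_bounded_above[of S w B] assms(4) unfolding S_def by auto
  also have "\<dots> \<le> B * (real C * N)"
    using card_S \<open>0 \<le> B\<close> by (simp add: mult.commute mult_left_mono)
  finally show ?thesis unfolding S_def .
qed

lemma log2_bound_by_ln:
  assumes "T \<ge> 2"
  shows "3 + log 2 (real T) \<le> 4 / ln 2 * ln (real T)"
proof -
  have "1 \<le> log 2 (real T)" using assms by (simp add: le_log_iff)
  then have "3 + log 2 (real T) \<le> 4 * log 2 (real T)" by simp
  then show ?thesis by (simp add: log_def)
qed

context
  fixes L :: real and T :: nat and f :: "real \<Rightarrow> real" and X :: "hist \<Rightarrow> real"
    and Cor :: "hist \<Rightarrow> real \<Rightarrow> real \<Rightarrow> bool" and pick :: "hist \<Rightarrow> bool"
  assumes L_pos: "L > 0" and T_ge_2: "T \<ge> 2" and X_range: "\<forall>h. X h \<in> {0..1}"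
begin

abbreviation partition_at :: "nat \<Rightarrow> node list" where
  "partition_at t \<equiv> fst (run L T f X Cor pick t)"

abbreviation interval_at :: "nat \<Rightarrow> real \<times> real" where
  "interval_at t \<equiv> round_interval L T f X Cor pick t"

abbreviation visits_before :: "nat \<Rightarrow> real \<times> real \<Rightarrow> nat" where
  "visits_before t k \<equiv> card {s. s < t \<and> interval_at s = k}"

lemma visits_before_Suc:
  "visits_before (Suc t) = (visits_before t)(interval_at t := Suc (visits_before t (interval_at t)))"
proof
  fix k
  have "{s. s < Suc t \<and> interval_at s = k} =
      (if interval_at t = k then insert t {s. s < t \<and> interval_at s = k} else {s. s < t \<and> interval_at s = k})"
    by (auto simp: less_Suc_eq)
  then show "visits_before (Suc t) k = ((visits_before t)(interval_at t := Suc (visits_before t (interval_at t)))) k"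
    by simp
qed

lemma partition_invariant_run: "partition_invariant L T (partition_at t) (visits_before t)"
proof (induction t)
  case 0
  show ?case using partition_invariant_init[OF L_pos T_ge_2] by simp
next
  case (Suc t)
  obtain P h where run_t: "run L T f X Cor pick t = (P, h)" by fastforce
  define i where "i = find_node P (X h)"
  have "tiles 0 1 P" using Suc.IH run_t unfolding partition_invariant_def by simp
  then have "i < length P" using find_node_tiles X_range unfolding i_def by simp
  have "\<exists>sg. partition_at (Suc t) = take i P @ update L T (P ! i) (guess (P ! i) (pick h)) sg @ drop (Suc i) P"
    using run_t by (auto simp: i_def Let_def)
  moreover have "interval_at t = endpoints (P ! i)"
    using run_t by (simp add: round_interval_def cur_node_def ctx_def i_def Let_def)
  ultimately show ?case
    using partition_invariant_step[OF Suc.IH[unfolded run_t fst_conv] \<open>i < length P\<close> L_pos T_ge_2]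
    by (auto simp: visits_before_Suc)
qed

lemma round_loss_le:
  assumes "\<forall>x\<in>{0..1}. f x \<in> {0..L}"
  shows "\<bar>f (ctx L T f X Cor pick t) - round_guess L T f X Cor pick t\<bar> \<le> L"
proof -
  let ?P = "partition_at t" and ?x = "ctx L T f X Cor pick t"
  have "?x \<in> {0..1}" using X_range unfolding ctx_def by simp
  moreover have "partition_invariant L T ?P (visits_before t)" by (rule partition_invariant_run)
  ultimately have "find_node ?P ?x < length ?P" and "\<forall>n\<in>set ?P. values_in_range L n"
    using find_node_tiles unfolding partition_invariant_def by auto
  then have "values_in_range L (cur_node L T f X Cor pick t)" unfolding cur_node_def Let_def by simp
  then have "round_guess L T f X Cor pick t \<in> {0..L}" unfolding round_guess_def by (rule guess_in_range)
  then show ?thesis using assms \<open>?x \<in> {0..1}\<close> by fastforce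
qed

lemma corrupted_interval_loss_le:
  assumes "\<forall>x\<in>{0..1}. f x \<in> {0..L}" "card {t. t < T \<and> round_corrupted L T f X Cor pick t} \<le> C"
  shows "(\<Sum>t | t < T \<and> in_corrupted_interval L T f X Cor pick t.
           \<bar>f (ctx L T f X Cor pick t) - round_guess L T f X Cor pick t\<bar>)
         \<le> L * (real C * (3 + log 2 (real T)))"
proof -
  let ?M = "{t. t < T \<and> round_corrupted L T f X Cor pick t}"
  have "real (visits_before T k) \<le> 3 + log 2 (real T)" for k
    using partition_invariant_run[of T] unfolding partition_invariant_def by blast
  then have "(\<Sum>t | t \<in> {..<T} \<and> (\<exists>s\<in>?M. interval_at s = interval_at t).
      \<bar>f (ctx L T f X Cor pick t) - round_guess L T f X Cor pick t\<bar>) \<le> L * (real C * (3 + log 2 (real T)))"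
    using round_loss_le[OF assms(1)] assms(2) L_pos by (intro sum_over_marked_classes_le) auto
  moreover have "{t. t \<in> {..<T} \<and> (\<exists>s\<in>?M. interval_at s = interval_at t)} =
      {t. t < T \<and> in_corrupted_interval L T f X Cor pick t}"
    by (auto simp: in_corrupted_interval_def)
  ultimately show ?thesis by simp
qed

end

theorem lemma25:
  "\<exists>K::real. \<forall>(L::real) (T::nat) (C::nat) (f::real \<Rightarrow> real) X Cor pick.
     L > 0 \<longrightarrow> T \<ge> 2 \<longrightarrow>
     L-lipschitz_on {0..1} f \<longrightarrow> (\<forall>x\<in>{0..1}. f x \<in> {0..L}) \<longrightarrow>
     (\<forall>h. X h \<in> {0..1}) \<longrightarrow>
     card {t. t < T \<and> round_corrupted L T f X Cor pick t} \<le> C \<longrightarrow>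
     (\<Sum>t | t < T \<and> in_corrupted_interval L T f X Cor pick t.
         \<bar>f (ctx L T f X Cor pick t) - round_guess L T f X Cor pick t\<bar>)
       \<le> K * L * (real C * ln (real T))"
proof (intro exI[of _ "4 / ln 2"] allI impI)
  fix L :: real and T C :: nat and f :: "real \<Rightarrow> real" and X Cor pick
  assume "L > 0" "T \<ge> 2" and f_range: "\<forall>x\<in>{0..1}. f x \<in> {0..L}"
    and X_range: "\<forall>h. X h \<in> {0..1}" and corruptions: "card {t. t < T \<and> round_corrupted L T f X Cor pick t} \<le> C"
  have "(\<Sum>t | t < T \<and> in_corrupted_interval L T f X Cor pick t.
      \<bar>f (ctx L T f X Cor pick t) - round_guess L T f X Cor pick t\<bar>) \<le> L * (real C * (3 + log 2 (real T)))"
    using corrupted_interval_loss_le[OF \<open>L > 0\<close> \<open>T \<ge> 2\<close> X_range f_range corruptions] .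
  also have "\<dots> \<le> L * (real C * (4 / ln 2 * ln (real T)))"
    using log2_bound_by_ln[OF \<open>T \<ge> 2\<close>] \<open>L > 0\<close> by (intro mult_left_mono) auto
  finally show "(\<Sum>t | t < T \<and> in_corrupted_interval L T f X Cor pick t.
      \<bar>f (ctx L T f X Cor pick t) - round_guess L T f X Cor pick t\<bar>) \<le> 4 / ln 2 * L * (real C * ln (real T))"
    by (simp add: algebra_simps)
qed

end
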